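(* Let $(X,\Sigma,\mu)$ be a $\sigma$-finite measure space, $n\ge1$, $b\in\mathbb{C}^n\setminus\{0\}$, $h\in L^\infty(X,\mu;\mathbb{C})$, and define $q:L^2(X,\mu;\mathbb{C}^n)\to\mathbb{C}^n$ by $q(F)=\int_X h(x)\langle b,f_x\rangle f_x\,d\mu(x)$. Suppose $\Phi\in q^{-1}(\{0\})$ is a continuous frame. Then, with $S_\Phi=q^{-1}(\{0\})\cap\big(q^{-1}(\{0\})-\Phi\big)$, the set $\mathcal{F}^{\mathbb{C}}_{(X,\mu),n}\cap S_\Phi$ is dense in $S_\Phi$ (for the norm of $L^2(X,\mu;\mathbb{C}^n)$).
   Context: The inner product on $\mathbb{C}^n$ is $\langle u,v\rangle=\sum_k u^k\overline{v^k}$. $q^{-1}(\{0\})-\Phi=\{G-\Phi: q(G)=0\}$. A family $\Phi=(\varphi_x)_{x\in X}$ in $\mathbb{C}^n$ (with measurable coordinates) is a continuous frame indexed by $(X,\mu)$ if there are $0<A\le B$ with $A\|v\|^2\le\int_X|\langle v,\varphi_x\rangle|^2d\mu(x)\le B\|v\|^2$ for all $v\in\mathbb{C}^n$. $\mathcal{F}^{\mathbb{C}}_{(X,\mu),n}$ denotes the set of such frames, viewed as a subset of $L^2(X,\mu;\mathbb{C}^n)$ (equivalently, the elements of $L^2(X,\mu;\mathbb{C}^n)$ whose coordinate functions are linearly independent in $L^2(X,\mu;\mathbb{C})$). *)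

theory Defs
  imports "HOL-Analysis.Analysis"
begin

text \<open>Vectors in C^n are modelled as complex^'n with 'n a finite type (n = CARD('n) >= 1).
  Elements of L^2(X,mu;C^n) are represented by measurable square-integrable functions.\<close>

definition cinner :: "complex^'n \<Rightarrow> complex^'n \<Rightarrow> complex" where
  "cinner u v = (\<Sum>k\<in>UNIV. u$k * cnj (v$k))"

definition L2 :: "'a measure \<Rightarrow> ('a \<Rightarrow> complex^'n) set" where
  "L2 M = {F. F \<in> borel_measurable M \<and> integrable M (\<lambda>x. (norm (F x))\<^sup>2)}"

definition L2norm :: "'a measure \<Rightarrow> ('a \<Rightarrow> complex^'n) \<Rightarrow> real" where
  "L2norm M F = sqrt (\<integral>x. (norm (F x))\<^sup>2 \<partial>M)"

definition Linfty :: "'a measure \<Rightarrow> ('a \<Rightarrow> complex) set" where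
  "Linfty M = {h. h \<in> borel_measurable M \<and> (\<exists>C. AE x in M. cmod (h x) \<le> C)}"

definition qmap :: "'a measure \<Rightarrow> ('a \<Rightarrow> complex) \<Rightarrow> complex^'n \<Rightarrow> ('a \<Rightarrow> complex^'n) \<Rightarrow> complex^'n" where
  "qmap M h b F = (\<integral>x. (h x * cinner b (F x)) *s F x \<partial>M)"

definition cont_frame :: "'a measure \<Rightarrow> ('a \<Rightarrow> complex^'n) \<Rightarrow> bool" where
  "cont_frame M \<Phi> \<longleftrightarrow> \<Phi> \<in> L2 M \<and>
     (\<exists>A B. 0 < A \<and> A \<le> B \<and> (\<forall>v::complex^'n.
        ennreal (A * (norm v)\<^sup>2) \<le> (\<integral>\<^sup>+x. ennreal ((cmod (cinner v (\<Phi> x)))\<^sup>2) \<partial>M) \<and>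
        (\<integral>\<^sup>+x. ennreal ((cmod (cinner v (\<Phi> x)))\<^sup>2) \<partial>M) \<le> ennreal (B * (norm v)\<^sup>2)))"

definition frames :: "'a measure \<Rightarrow> ('a \<Rightarrow> complex^'n) set" where
  "frames M = {\<Phi>. cont_frame M \<Phi>}"

definition S_set :: "'a measure \<Rightarrow> ('a \<Rightarrow> complex) \<Rightarrow> complex^'n \<Rightarrow> ('a \<Rightarrow> complex^'n) \<Rightarrow> ('a \<Rightarrow> complex^'n) set" where
  "S_set M h b \<Phi> = {G \<in> L2 M. qmap M h b G = 0 \<and>
      (\<exists>G' \<in> L2 M. qmap M h b G' = 0 \<and> G = (\<lambda>x. G' x - \<Phi> x))}"

end

theory Submission
  imports Defs
begin

(* If G lies in S_Phi, so does G + t Phi for every real t: q(G + t Phi) is a quadratic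
   polynomial in t whose constant and leading coefficients q(G) and q(Phi) vanish, and it
   vanishes at t = 1 because G + Phi lies in q^-1(0).
   A square-integrable family is a frame iff no nonzero vector is a.e. orthogonal to it (the
   lower bound is the minimum of the continuous form v |-> int |<v, F x>|^2 on the unit sphere).
   If v_t annihilates G + t Phi for pairwise distinct t, pairing a vanishing combination
   sum c_t v_t with G and with Phi shows that sum c_t (t - s) v_t annihilates the frame Phi;
   by induction the v_t are linearly independent. Hence G + t Phi fails to be a frame for at
   most finitely many t, and a small t > 0 gives a frame in S_Phi within t ||Phi|| of G. *)

lemma cinner_add_right: "cinner u (v + w) = cinner u v + cinner u w"
  unfolding cinner_def by (simp add: sum.distrib algebra_simps)

lemma cinner_scaleR_right: "cinner u (r *\<^sub>R v) = of_real r * cinner u v"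
  unfolding cinner_def by (simp add: sum_distrib_left scaleR_conv_of_real[where 'a=complex] algebra_simps)

lemma cinner_diff_left: "cinner (u - v) w = cinner u w - cinner v w"
  unfolding cinner_def by (simp add: sum_subtractf algebra_simps)

lemma cinner_scaleR_left: "cinner (r *\<^sub>R u) w = of_real r * cinner u w"
  unfolding cinner_def by (simp add: sum_distrib_left scaleR_conv_of_real[where 'a=complex] algebra_simps)

lemma cinner_sum_left: "cinner (\<Sum>t\<in>T. f t) w = (\<Sum>t\<in>T. cinner (f t) w)"
  unfolding cinner_def by (subst sum.swap) (simp add: sum_distrib_right)

lemma norm_cinner_le: "cmod (cinner u v) \<le> norm u * norm v"
proof -
  have "cmod (cinner u v) \<le> (\<Sum>k\<in>UNIV. cmod (u$k) * cmod (v$k))"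
    unfolding cinner_def by (rule order_trans[OF norm_sum]) (simp add: norm_mult)
  also have "\<dots> \<le> L2_set (\<lambda>k. cmod (u$k)) UNIV * L2_set (\<lambda>k. cmod (v$k)) UNIV"
    using L2_set_mult_ineq[of "\<lambda>k. cmod (u$k)" "\<lambda>k. cmod (v$k)"] by simp
  finally show ?thesis by (simp add: norm_vec_def)
qed

lemma norm_cinner_sq_le: "(cmod (cinner u v))\<^sup>2 \<le> (norm u)\<^sup>2 * (norm v)\<^sup>2"
  by (metis norm_cinner_le norm_ge_zero power_mono power_mult_distrib)

lemma norm_vector_scalar_mult: "norm (c *s (v::complex^'n)) = cmod c * norm v"
  unfolding norm_vec_def by (simp add: norm_mult L2_set_right_distrib[symmetric])

lemma borel_measurable_cinner_right:
  "F \<in> borel_measurable M \<Longrightarrow> (\<lambda>x. cinner v (F x)) \<in> borel_measurable M"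
  by (rule borel_measurable_continuous_on[where f="cinner v"])
     (auto simp: cinner_def intro!: continuous_intros)

lemma borel_measurable_vector_scalar_mult:
  fixes c :: "'a \<Rightarrow> complex" and V :: "'a \<Rightarrow> complex^'n"
  shows "c \<in> borel_measurable M \<Longrightarrow> V \<in> borel_measurable M \<Longrightarrow> (\<lambda>x. c x *s V x) \<in> borel_measurable M"
  by (rule borel_measurable_continuous_Pair[where H="\<lambda>c v. c *s v"])
     (auto simp: vector_scalar_mult_def intro!: continuous_intros)

section \<open>Square-integrable functions and the quadratic map\<close>

lemma L2_add_scaleR:
  fixes U V :: "'a \<Rightarrow> complex^'n"
  assumes U: "U \<in> L2 M" and V: "V \<in> L2 M"
  shows "(\<lambda>x. U x + r *\<^sub>R V x) \<in> L2 M"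
proof -
  have mU: "U \<in> borel_measurable M" and mV: "V \<in> borel_measurable M"
    using U V by (auto simp: L2_def)
  have pointwise: "(norm (U x + r *\<^sub>R V x))\<^sup>2 \<le> 2 * (norm (U x))\<^sup>2 + 2 * r\<^sup>2 * (norm (V x))\<^sup>2" for x
  proof -
    have "norm (U x + r *\<^sub>R V x) \<le> norm (U x) + \<bar>r\<bar> * norm (V x)"
      by (metis norm_scaleR norm_triangle_ineq)
    then have "(norm (U x + r *\<^sub>R V x))\<^sup>2 \<le> (norm (U x) + \<bar>r\<bar> * norm (V x))\<^sup>2"
      by (simp add: power_mono)
    also have "\<dots> \<le> 2 * (norm (U x))\<^sup>2 + 2 * r\<^sup>2 * (norm (V x))\<^sup>2"
      using sum_squares_bound[of "norm (U x)" "\<bar>r\<bar> * norm (V x)"]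
      by (simp add: power2_sum power_mult_distrib)
    finally show ?thesis .
  qed
  have "integrable M (\<lambda>x. 2 * (norm (U x))\<^sup>2 + 2 * r\<^sup>2 * (norm (V x))\<^sup>2)"
    using U V by (simp add: L2_def)
  then have "integrable M (\<lambda>x. (norm (U x + r *\<^sub>R V x))\<^sup>2)"
    by (rule Bochner_Integration.integrable_bound) (use U V pointwise in \<open>auto simp: L2_def\<close>)
  moreover have "(\<lambda>x. U x + r *\<^sub>R V x) \<in> borel_measurable M"
    using mU mV by measurable
  ultimately show ?thesis
    by (simp add: L2_def)
qed

lemma integrable_qmap_integrand:
  fixes U V :: "'a \<Rightarrow> complex^'n"
  assumes h: "h \<in> Linfty M" and U: "U \<in> L2 M" and V: "V \<in> L2 M"
  shows "integrable M (\<lambda>x. (h x * cinner b (U x)) *s V x)"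
proof -
  obtain C where C: "AE x in M. cmod (h x) \<le> C" and mh: "h \<in> borel_measurable M"
    using h by (auto simp: Linfty_def)
  have mU: "U \<in> borel_measurable M" and mV: "V \<in> borel_measurable M"
    using U V by (auto simp: L2_def)
  have bound: "AE x in M. norm ((h x * cinner b (U x)) *s V x)
                     \<le> \<bar>C\<bar> * norm b * ((norm (U x))\<^sup>2 + (norm (V x))\<^sup>2)"
    using C
  proof eventually_elim
    case (elim x)
    have "norm ((h x * cinner b (U x)) *s V x) \<le> \<bar>C\<bar> * (norm b * norm (U x)) * norm (V x)"
      unfolding norm_vector_scalar_mult norm_mult
      using elim norm_cinner_le[of b "U x"] by (intro mult_mono) auto
    also have "\<dots> \<le> \<bar>C\<bar> * norm b * (2 * norm (U x) * norm (V x))"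
      by (simp add: mult_ac mult_right_mono)
    also have "\<dots> \<le> \<bar>C\<bar> * norm b * ((norm (U x))\<^sup>2 + (norm (V x))\<^sup>2)"
      by (simp add: mult_left_mono sum_squares_bound)
    finally show ?case .
  qed
  have "integrable M (\<lambda>x. \<bar>C\<bar> * norm b * ((norm (U x))\<^sup>2 + (norm (V x))\<^sup>2))"
    using U V by (simp add: L2_def)
  moreover have "(\<lambda>x. (h x * cinner b (U x)) *s V x) \<in> borel_measurable M"
    by (intro borel_measurable_vector_scalar_mult borel_measurable_times
        borel_measurable_cinner_right mh mU mV)
  moreover from bound have "AE x in M. norm ((h x * cinner b (U x)) *s V x)
      \<le> norm (\<bar>C\<bar> * norm b * ((norm (U x))\<^sup>2 + (norm (V x))\<^sup>2))"
    by eventually_elim (simp add: abs_mult)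
  ultimately show ?thesis
    by (rule Bochner_Integration.integrable_bound)
qed

lemma qmap_add_scaleR:
  fixes G P :: "'a \<Rightarrow> complex^'n"
  assumes h: "h \<in> Linfty M" and G: "G \<in> L2 M" and P: "P \<in> L2 M"
  shows "qmap M h b (\<lambda>x. G x + s *\<^sub>R P x) = qmap M h b G
     + s *\<^sub>R (\<integral>x. (h x * cinner b (G x)) *s P x + (h x * cinner b (P x)) *s G x \<partial>M)
     + s\<^sup>2 *\<^sub>R qmap M h b P"
proof -
  have expand: "(c * cinner b (g + s *\<^sub>R p)) *s (g + s *\<^sub>R p) =
      (c * cinner b g) *s g + s *\<^sub>R ((c * cinner b g) *s p + (c * cinner b p) *s g)
      + s\<^sup>2 *\<^sub>R ((c * cinner b p) *s p)" for c and g p :: "complex^'n"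
    by (simp add: vec_eq_iff cinner_add_right cinner_scaleR_right scaleR_conv_of_real[where 'a=complex]
        algebra_simps power2_eq_square)
  show ?thesis
    unfolding qmap_def expand
    using integrable_qmap_integrand[OF h G G] integrable_qmap_integrand[OF h G P]
      integrable_qmap_integrand[OF h P G] integrable_qmap_integrand[OF h P P]
    by simp
qed

lemma S_set_add_scaleR:
  fixes G P :: "'a \<Rightarrow> complex^'n"
  assumes h: "h \<in> Linfty M" and P: "P \<in> L2 M" and qP: "qmap M h b P = 0"
    and GS: "G \<in> S_set M h b P"
  shows "(\<lambda>x. G x + s *\<^sub>R P x) \<in> S_set M h b P"
proof -
  from GS obtain G' where G: "G \<in> L2 M" and qG: "qmap M h b G = 0"
    and qG': "qmap M h b G' = 0" and G'_eq: "G = (\<lambda>x. G' x - P x)"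
    by (auto simp: S_set_def)
  define X where "X = (\<integral>x. (h x * cinner b (G x)) *s P x + (h x * cinner b (P x)) *s G x \<partial>M)"
  have q: "qmap M h b (\<lambda>x. G x + s *\<^sub>R P x) = s *\<^sub>R X" for s
    using qmap_add_scaleR[OF h G P, of b s] qG qP by (simp add: X_def)
  have "(\<lambda>x. G x + 1 *\<^sub>R P x) = G'"
    using G'_eq by auto
  then have "X = 0"
    using q[of 1] qG' by simp
  then have "qmap M h b (\<lambda>x. G x + s *\<^sub>R P x) = 0"
    and "qmap M h b (\<lambda>x. G x + (s + 1) *\<^sub>R P x) = 0"
    using q by simp_all
  moreover have "(\<lambda>x. G x + s *\<^sub>R P x) = (\<lambda>x. (G x + (s + 1) *\<^sub>R P x) - P x)"
    by (auto simp: algebra_simps)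
  ultimately show ?thesis
    unfolding S_set_def using L2_add_scaleR[OF G P] by blast
qed

section \<open>Frames\<close>

definition frame_form :: "'a measure \<Rightarrow> ('a \<Rightarrow> complex^'n) \<Rightarrow> complex^'n \<Rightarrow> real" where
  "frame_form M F v = (\<integral>x. (cmod (cinner v (F x)))\<^sup>2 \<partial>M)"

lemma frame_form_nonneg: "0 \<le> frame_form M F v"
  unfolding frame_form_def by simp

lemma integrable_norm_cinner_sq:
  fixes F :: "'a \<Rightarrow> complex^'n"
  assumes F: "F \<in> L2 M"
  shows "integrable M (\<lambda>x. (cmod (cinner v (F x)))\<^sup>2)"
proof -
  have "(\<lambda>x. cinner v (F x)) \<in> borel_measurable M"
    using F by (intro borel_measurable_cinner_right) (simp add: L2_def)
  then have "(\<lambda>x. (cmod (cinner v (F x)))\<^sup>2) \<in> borel_measurable M"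
    by measurable
  then show ?thesis
  proof (rule Bochner_Integration.integrable_bound[rotated])
    show "integrable M (\<lambda>x. (norm v)\<^sup>2 * (norm (F x))\<^sup>2)"
      using F by (simp add: L2_def)
    show "AE x in M. norm ((cmod (cinner v (F x)))\<^sup>2) \<le> norm ((norm v)\<^sup>2 * (norm (F x))\<^sup>2)"
      by (intro AE_I2) (simp add: norm_cinner_sq_le abs_mult)
  qed
qed

lemma nn_integral_norm_cinner_sq:
  fixes F :: "'a \<Rightarrow> complex^'n"
  assumes "F \<in> L2 M"
  shows "(\<integral>\<^sup>+x. ennreal ((cmod (cinner v (F x)))\<^sup>2) \<partial>M) = ennreal (frame_form M F v)"
  unfolding frame_form_def using assms
  by (intro nn_integral_eq_integral integrable_norm_cinner_sq) auto

lemma frame_form_le: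
  fixes F :: "'a \<Rightarrow> complex^'n"
  assumes F: "F \<in> L2 M"
  shows "frame_form M F v \<le> (\<integral>x. (norm (F x))\<^sup>2 \<partial>M) * (norm v)\<^sup>2"
proof -
  have "frame_form M F v \<le> (\<integral>x. (norm v)\<^sup>2 * (norm (F x))\<^sup>2 \<partial>M)"
    unfolding frame_form_def using F norm_cinner_sq_le
    by (intro integral_mono integrable_norm_cinner_sq) (auto simp: L2_def)
  then show ?thesis
    by (simp add: mult.commute)
qed

lemma frame_form_scaleR: "frame_form M F (r *\<^sub>R v) = r\<^sup>2 * frame_form M F v"
  unfolding frame_form_def by (simp add: cinner_scaleR_left norm_mult power_mult_distrib)

lemma frame_form_eq_0_iff:
  fixes F :: "'a \<Rightarrow> complex^'n"
  assumes "F \<in> L2 M"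
  shows "frame_form M F v = 0 \<longleftrightarrow> (AE x in M. cinner v (F x) = 0)"
  unfolding frame_form_def
  using integral_nonneg_eq_0_iff_AE[OF integrable_norm_cinner_sq[OF assms]] by simp

lemma norm_cinner_sq_diff_le:
  assumes "norm v = 1" and "norm w = 1"
  shows "\<bar>(cmod (cinner v y))\<^sup>2 - (cmod (cinner w y))\<^sup>2\<bar> \<le> 2 * dist v w * (norm y)\<^sup>2"
proof -
  define a where "a = cmod (cinner v y)"
  define c where "c = cmod (cinner w y)"
  have "\<bar>a - c\<bar> \<le> cmod (cinner (v - w) y)"
    unfolding a_def c_def cinner_diff_left by (rule norm_triangle_ineq3)
  also have "\<dots> \<le> dist v w * norm y"
    using norm_cinner_le by (simp add: dist_norm)
  finally have "\<bar>a - c\<bar> \<le> dist v w * norm y" .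
  moreover have "a + c \<le> 2 * norm y"
    unfolding a_def c_def using norm_cinner_le[of v y] norm_cinner_le[of w y] assms by simp
  moreover have "0 \<le> a + c"
    unfolding a_def c_def by simp
  moreover have "a\<^sup>2 - c\<^sup>2 = (a + c) * (a - c)"
    by (simp add: power2_eq_square square_diff_square_factored)
  ultimately have "\<bar>a\<^sup>2 - c\<^sup>2\<bar> \<le> (2 * norm y) * (dist v w * norm y)"
    by (simp add: abs_mult mult_mono)
  then show ?thesis
    unfolding a_def c_def by (simp add: power2_eq_square algebra_simps)
qed

lemma continuous_on_frame_form:
  fixes F :: "'a \<Rightarrow> complex^'n"
  assumes F: "F \<in> L2 M"
  shows "continuous_on (sphere 0 1) (frame_form M F)"
proof -
  define K where "K = (\<integral>x. (norm (F x))\<^sup>2 \<partial>M)"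
  have lipschitz: "dist (frame_form M F v) (frame_form M F w) \<le> (2 * K) * dist v w"
    if "v \<in> sphere 0 1" "w \<in> sphere 0 1" for v w
  proof -
    have "\<bar>frame_form M F v - frame_form M F w\<bar>
        = \<bar>\<integral>x. (cmod (cinner v (F x)))\<^sup>2 - (cmod (cinner w (F x)))\<^sup>2 \<partial>M\<bar>"
      unfolding frame_form_def using integrable_norm_cinner_sq[OF F] by simp
    also have "\<dots> \<le> (\<integral>x. \<bar>(cmod (cinner v (F x)))\<^sup>2 - (cmod (cinner w (F x)))\<^sup>2\<bar> \<partial>M)"
      by (rule integral_abs_bound)
    also have "\<dots> \<le> (\<integral>x. 2 * dist v w * (norm (F x))\<^sup>2 \<partial>M)"
      using F integrable_norm_cinner_sq[OF F] norm_cinner_sq_diff_le that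
      by (intro integral_mono) (auto simp: L2_def)
    finally show ?thesis
      by (simp add: K_def dist_real_def mult_ac)
  qed
  have "0 \<le> 2 * K"
    unfolding K_def by simp
  with lipschitz have "(2 * K)-lipschitz_on (sphere 0 1) (frame_form M F)"
    by (simp add: lipschitz_on_def)
  then show ?thesis
    by (rule lipschitz_on_continuous_on)
qed

lemma frame_form_lower_bound:
  fixes F :: "'a \<Rightarrow> complex^'n"
  assumes F: "F \<in> L2 M" and nondegenerate: "\<And>v. (AE x in M. cinner v (F x) = 0) \<Longrightarrow> v = 0"
  obtains A where "0 < A" and "\<And>v. A * (norm v)\<^sup>2 \<le> frame_form M F v"
proof -
  obtain u where u: "u \<in> sphere 0 1"
    and min: "\<And>w. w \<in> sphere 0 1 \<Longrightarrow> frame_form M F u \<le> frame_form M F w"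
    using continuous_attains_inf[OF compact_sphere _ continuous_on_frame_form[OF F]] by auto
  have "frame_form M F u \<noteq> 0"
    using u nondegenerate frame_form_eq_0_iff[OF F] by force
  then have pos: "0 < frame_form M F u"
    using frame_form_nonneg[of M F u] by linarith
  have "frame_form M F u * (norm v)\<^sup>2 \<le> frame_form M F v" for v
  proof (cases "v = 0")
    case True
    then show ?thesis
      by (simp add: frame_form_def)
  next
    case False
    then have "frame_form M F v = (norm v)\<^sup>2 * frame_form M F (v /\<^sub>R norm v)"
      using frame_form_scaleR[of M F "norm v" "v /\<^sub>R norm v"] by simp
    moreover have "frame_form M F u \<le> frame_form M F (v /\<^sub>R norm v)"
      using False by (intro min) simp
    ultimately show ?thesis
      by (metis mult.commute mult_right_mono zero_le_power2)
  qed
  with pos show ?thesis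
    by (rule that)
qed

lemma cont_frame_iff:
  fixes F :: "'a \<Rightarrow> complex^'n"
  shows "cont_frame M F \<longleftrightarrow> F \<in> L2 M \<and> (\<forall>v. (AE x in M. cinner v (F x) = 0) \<longrightarrow> v = 0)"
proof
  assume frame: "cont_frame M F"
  then have F: "F \<in> L2 M"
    by (simp add: cont_frame_def)
  have "v = 0" if AE: "AE x in M. cinner v (F x) = 0" for v
  proof -
    obtain A where A: "0 < A"
      and lower: "ennreal (A * (norm v)\<^sup>2) \<le> (\<integral>\<^sup>+x. ennreal ((cmod (cinner v (F x)))\<^sup>2) \<partial>M)"
      using frame unfolding cont_frame_def by blast
    have "frame_form M F v = 0"
      using AE frame_form_eq_0_iff[OF F] by simp
    then have "A * (norm v)\<^sup>2 \<le> 0"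
      using lower nn_integral_norm_cinner_sq[OF F] by (simp add: ennreal_eq_0_iff)
    with A show "v = 0"
      by (simp add: mult_le_0_iff)
  qed
  with F show "F \<in> L2 M \<and> (\<forall>v. (AE x in M. cinner v (F x) = 0) \<longrightarrow> v = 0)"
    by blast
next
  assume "F \<in> L2 M \<and> (\<forall>v. (AE x in M. cinner v (F x) = 0) \<longrightarrow> v = 0)"
  then have F: "F \<in> L2 M" and nondegenerate: "\<And>v. (AE x in M. cinner v (F x) = 0) \<Longrightarrow> v = 0"
    by blast+
  obtain A where A: "0 < A" and lower: "\<And>v. A * (norm v)\<^sup>2 \<le> frame_form M F v"
    using frame_form_lower_bound[OF F nondegenerate] by blast
  define B where "B = max A (\<integral>x. (norm (F x))\<^sup>2 \<partial>M)"
  have upper: "frame_form M F v \<le> B * (norm v)\<^sup>2" for v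
    using frame_form_le[OF F, of v] by (simp add: B_def mult_right_mono order_trans)
  show "cont_frame M F"
    unfolding cont_frame_def nn_integral_norm_cinner_sq[OF F]
    using F A lower upper by (intro conjI exI[of _ A] exI[of _ B]) (auto simp: B_def intro: ennreal_leI)
qed

section \<open>Perturbing along a frame\<close>

lemma AE_cinner_shifted_combination_eq_0:
  fixes G P :: "'a \<Rightarrow> complex^'n" and v :: "real \<Rightarrow> complex^'n"
  assumes "finite S"
    and "\<And>t. t \<in> S \<Longrightarrow> AE x in M. cinner (v t) (G x + t *\<^sub>R P x) = 0"
    and "(\<Sum>t\<in>S. c t *\<^sub>R v t) = 0"
  shows "AE x in M. cinner (\<Sum>t\<in>S. (c t * (t - s)) *\<^sub>R v t) (P x) = 0"
proof -
  have "\<forall>t\<in>S. AE x in M. cinner (v t) (G x) = - (of_real t * cinner (v t) (P x))"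
    using assms(2)
    by (fastforce simp: cinner_add_right cinner_scaleR_right eq_neg_iff_add_eq_0 elim: eventually_mono)
  then have "AE x in M. \<forall>t\<in>S. cinner (v t) (G x) = - (of_real t * cinner (v t) (P x))"
    using assms(1) by (simp add: eventually_ball_finite_distrib)
  then show ?thesis
  proof eventually_elim
    case (elim x)
    let ?p = "\<lambda>t. cinner (v t) (P x)"
    have "cinner (\<Sum>t\<in>S. (c t * (t - s)) *\<^sub>R v t) (P x) = (\<Sum>t\<in>S. of_real (c t * (t - s)) * ?p t)"
      by (simp add: cinner_sum_left cinner_scaleR_left)
    also have "\<dots> = (\<Sum>t\<in>S. of_real (c t) * (of_real t * ?p t)) - of_real s * (\<Sum>t\<in>S. of_real (c t) * ?p t)"
      by (simp add: sum_subtractf sum_distrib_left algebra_simps)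
    also have "(\<Sum>t\<in>S. of_real (c t) * (of_real t * ?p t)) = - (\<Sum>t\<in>S. of_real (c t) * cinner (v t) (G x))"
      unfolding sum_negf[symmetric] by (rule sum.cong) (use elim in auto)
    also have "- (\<Sum>t\<in>S. of_real (c t) * cinner (v t) (G x)) - of_real s * (\<Sum>t\<in>S. of_real (c t) * ?p t)
        = - cinner (\<Sum>t\<in>S. c t *\<^sub>R v t) (G x) - of_real s * cinner (\<Sum>t\<in>S. c t *\<^sub>R v t) (P x)"
      by (simp add: cinner_sum_left cinner_scaleR_left)
    also have "\<dots> = 0"
      using assms(3) by (simp add: cinner_def)
    finally show ?case .
  qed
qed

lemma annihilators_independent:
  fixes G P :: "'a \<Rightarrow> complex^'n" and v :: "real \<Rightarrow> complex^'n"
  assumes P: "cont_frame M P" and "finite T"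
    and "\<And>t. t \<in> T \<Longrightarrow> v t \<noteq> 0"
    and "\<And>t. t \<in> T \<Longrightarrow> AE x in M. cinner (v t) (G x + t *\<^sub>R P x) = 0"
    and "(\<Sum>t\<in>T. c t *\<^sub>R v t) = 0"
  shows "\<forall>t\<in>T. c t = 0"
  using assms(2-)
proof (induction T arbitrary: c rule: finite_induct)
  case empty
  then show ?case by simp
next
  case (insert s T)
  have "AE x in M. cinner (\<Sum>t\<in>insert s T. (c t * (t - s)) *\<^sub>R v t) (P x) = 0"
    using insert.hyps(1) insert.prems(2,3) by (intro AE_cinner_shifted_combination_eq_0[where G=G]) auto
  then have "(\<Sum>t\<in>T. (c t * (t - s)) *\<^sub>R v t) = 0"
    using P insert.hyps by (simp add: cont_frame_iff)
  then have "\<forall>t\<in>T. c t * (t - s) = 0"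
    using insert.IH[of "\<lambda>t. c t * (t - s)"] insert.prems(1,2) by blast
  then have cT: "\<forall>t\<in>T. c t = 0"
    using insert.hyps(2) by auto
  then have "c s *\<^sub>R v s = 0"
    using insert.prems(3) insert.hyps by simp
  with cT insert.prems(1) show ?case
    by simp
qed

lemma finite_nonframe_parameters:
  fixes G P :: "'a \<Rightarrow> complex^'n"
  assumes P: "cont_frame M P" and G: "G \<in> L2 M"
  shows "finite {t::real. \<not> cont_frame M (\<lambda>x. G x + t *\<^sub>R P x)}" (is "finite ?Bad")
proof -
  have "P \<in> L2 M"
    using P by (simp add: cont_frame_def)
  then have "\<forall>t\<in>?Bad. \<exists>u. u \<noteq> 0 \<and> (AE x in M. cinner u (G x + t *\<^sub>R P x) = 0)"
    using L2_add_scaleR[OF G] by (auto simp: cont_frame_iff)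
  then have "\<exists>v. \<forall>t\<in>?Bad. v t \<noteq> 0 \<and> (AE x in M. cinner (v t) (G x + t *\<^sub>R P x) = 0)"
    by (rule bchoice)
  then obtain v where v: "\<forall>t\<in>?Bad. v t \<noteq> 0 \<and> (AE x in M. cinner (v t) (G x + t *\<^sub>R P x) = 0)"
    by blast
  have independent: "\<forall>t\<in>T. c t = 0"
    if "finite T" "T \<subseteq> ?Bad" "(\<Sum>t\<in>T. c t *\<^sub>R v t) = 0" for T c
    using annihilators_independent[OF P that(1), of v] v that(2,3) by blast
  have "inj_on v ?Bad"
  proof (rule inj_onI, rule ccontr)
    fix s t assume st: "s \<in> ?Bad" "t \<in> ?Bad" "v s = v t" "s \<noteq> t"
    then have "(\<Sum>r\<in>{s, t}. (if r = s then 1 else -1) *\<^sub>R v r) = 0"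
      by simp
    then show False
      using independent[of "{s, t}" "\<lambda>r. if r = s then 1 else -1"] st by auto
  qed
  have "card T \<le> DIM(complex^'n)" if T_Bad: "T \<subseteq> ?Bad" and T_finite: "finite T" for T
  proof -
    have inj: "inj_on v T"
      using \<open>inj_on v ?Bad\<close> T_Bad by (rule inj_on_subset)
    have "independent (v ` T)"
    proof
      assume "dependent (v ` T)"
      then obtain u where u: "\<exists>w\<in>v ` T. u w \<noteq> 0" "(\<Sum>w\<in>v ` T. u w *\<^sub>R w) = 0"
        unfolding real_vector.dependent_finite[OF finite_imageI[OF T_finite]] by blast
      have "(\<Sum>t\<in>T. u (v t) *\<^sub>R v t) = 0"
        using u(2) by (simp add: sum.reindex[OF inj])
      with u(1) show False
        using independent[OF T_finite T_Bad, of "u \<circ> v"] by auto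
    qed
    then have "card (v ` T) \<le> DIM(complex^'n)"
      by (rule independent_bound[THEN conjunct2])
    then show ?thesis
      by (simp add: card_image[OF inj])
  qed
  then show ?thesis
    using finite_if_finite_subsets_card_bdd by blast
qed

lemma obtain_small_frame_perturbation:
  fixes G P :: "'a \<Rightarrow> complex^'n"
  assumes "cont_frame M P" and "G \<in> L2 M" and "0 < \<delta>"
  obtains t where "0 < t" and "t < \<delta>" and "cont_frame M (\<lambda>x. G x + t *\<^sub>R P x)"
proof -
  have "infinite ({0<..<\<delta>} - {t. \<not> cont_frame M (\<lambda>x. G x + t *\<^sub>R P x)})"
    using finite_nonframe_parameters[OF assms(1,2)] assms(3) by (intro Diff_infinite_finite) simp_all
  then obtain t where "t \<in> {0<..<\<delta>} - {t. \<not> cont_frame M (\<lambda>x. G x + t *\<^sub>R P x)}"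
    using infinite_imp_nonempty by blast
  then show ?thesis
    using that by auto
qed

lemma L2norm_scaleR: "L2norm M (\<lambda>x. r *\<^sub>R F x) = \<bar>r\<bar> * L2norm M F"
  unfolding L2norm_def by (simp add: power_mult_distrib real_sqrt_mult)

theorem corollary6p6:
  fixes M :: "'a measure" and h :: "'a \<Rightarrow> complex" and b :: "complex^'n"
    and \<Phi> :: "'a \<Rightarrow> complex^'n"
  assumes "sigma_finite_measure M"
    and "b \<noteq> 0"
    and "h \<in> Linfty M"
    and "\<Phi> \<in> L2 M" and "qmap M h b \<Phi> = 0"
    and "cont_frame M \<Phi>"
  shows "\<forall>G \<in> S_set M h b \<Phi>. \<forall>\<epsilon>>0. \<exists>F \<in> frames M \<inter> S_set M h b \<Phi>.
           L2norm M (\<lambda>x. F x - G x) < \<epsilon>"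
proof (intro ballI allI impI)
  fix G and \<epsilon> :: real
  assume G: "G \<in> S_set M h b \<Phi>" and "0 < \<epsilon>"
  define N where "N = L2norm M \<Phi>"
  have "0 \<le> N"
    by (simp add: N_def L2norm_def)
  obtain t where t: "0 < t" "t < \<epsilon> / (N + 1)" "cont_frame M (\<lambda>x. G x + t *\<^sub>R \<Phi> x)"
    using obtain_small_frame_perturbation[OF assms(6), of G "\<epsilon> / (N + 1)"] G \<open>0 < \<epsilon>\<close> \<open>0 \<le> N\<close>
    by (auto simp: S_set_def)
  have "L2norm M (\<lambda>x. (G x + t *\<^sub>R \<Phi> x) - G x) = t * N"
    using t by (simp add: N_def L2norm_scaleR)
  also have "\<dots> < \<epsilon>"
    using t \<open>0 \<le> N\<close> by (simp add: pos_less_divide_eq distrib_left)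
  finally have "L2norm M (\<lambda>x. (G x + t *\<^sub>R \<Phi> x) - G x) < \<epsilon>" .
  moreover have "(\<lambda>x. G x + t *\<^sub>R \<Phi> x) \<in> frames M \<inter> S_set M h b \<Phi>"
    using t(3) S_set_add_scaleR[OF assms(3-5) G] by (simp add: frames_def)
  ultimately show "\<exists>F \<in> frames M \<inter> S_set M h b \<Phi>. L2norm M (\<lambda>x. F x - G x) < \<epsilon>"
    by (intro bexI[where x="\<lambda>x. G x + t *\<^sub>R \<Phi> x"])
qed

end
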